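(* (Soundness.) Let $(C_1;\pi_1)$ and $(C_2;\pi_2)$ be constrained clauses and let $(R;\pi_R)$ be the conclusion of an SDC-Resolution inference with premises $(C_1;\pi_1)$ and $(C_2;\pi_2)$. Then every Herbrand interpretation satisfying both $(C_1;\pi_1)$ and $(C_2;\pi_2)$ satisfies $(R;\pi_R)$. Likewise, if $(R;\pi_R)$ is the conclusion of an SDC-Factoring inference with premise $(C;\pi)$, then every Herbrand interpretation satisfying $(C;\pi)$ satisfies $(R;\pi_R)$.
   Context: Clauses: a clause is written $\Gamma\rightarrow\Delta$ where $\Gamma,\Delta$ are finite multisets of atoms ($\Gamma$ the negative literals, $\Delta$ the positive literals); $\Gamma_1,\Gamma_2$ denotes multiset union. All predicates relevant here are monadic. Straight terms: a variable and a constant are straight; $f(s_1,\dots,s_n)$ is straight if $s_1,\dots,s_n$ are pairwise distinct variables except for at most one argument $s_i$ that is a straight term. The depth of variables and constants is $0$, depth$(f(s_1,\dots,s_n))=1+\max_i$ depth$(s_i)$. A term is shallow if its depth is at most 1, linear if no variable occurs twice in it. Straight dismatching constraints (SDCs): an atomic SDC is $t\neq s$ with $s,t$ variable-disjoint terms and $s$ straight; an SDC $\pi=\bigwedge_{i\in I} t_i\neq s_i$ is a finite conjunction of atomic SDCs ($\top$ = empty conjunction, $\bot$ = false). For a substitution $\sigma$, $\pi\sigma=\bigwedge_i t_i\sigma\neq s_i$. A solution of $\pi$ is a grounding substitution $\delta$ such that for no $i$ is $t_i\delta$ an instance of $s_i$ (i.e. there is no $\tau$ with $t_i\delta=s_i\tau$);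 $\pi$ is solvable if it has a solution. The normalization $\mathrm{norm}(\pi)$ is the normal form of $\pi$ under the rewrite rules: $\pi\wedge f(t_1,\dots,t_n)\neq y \to \bot$; $\pi\wedge f(t_1,\dots,t_n)\neq f(y_1,\dots,y_n)\to\bot$ ($y_i$ variables); $\pi\wedge f(t_1,\dots,t_n)\neq f(s_1,\dots,s_n)\to \pi\wedge t_i\neq s_i$ if $s_i$ is complex (non-variable); $\pi\wedge f(t_1,\dots,t_n)\neq g(s_1,\dots,s_m)\to\pi$ for $f\neq g$; $\pi\wedge x\neq s\wedge x\neq s\sigma\to\pi\wedge x\neq s$. Constrained clauses: a pair $(C;\pi)$ of a clause and an SDC; $(C;\pi)\sigma=(C\sigma;\pi\sigma)$. Its ground instances are the clauses $C\delta$ with $\delta$ a solution of $\pi$ grounding all variables of $C$ and of the left-hand sides of $\pi$. A Herbrand interpretation $I$ is a set of ground atoms; $I$ satisfies a ground clause $\Gamma\rightarrow\Delta$ if $\Delta\cap I\neq\emptyset$ or $\Gamma\not\subseteq I$; $I$ satisfies $(C;\pi)$ if it satisfies all its ground instances. MSL(SDC) clauses: $(C;\pi)$ with $\pi$ an SDC and $C=\Gamma\rightarrow\Delta$ an MSL clause, i.e. (i) all argument terms of atoms in $\Delta$ are shallow, every atom in $\Delta$ is linear and distinct atoms of $\Delta$ share no variables, (ii) all predicates are monadic, (iii) no equations occur in $\Delta$, (iv) no equations occur in $\Gamma$, or $\Gamma=\{s\approx t\}$ with $\Delta$ empty and $s,t$ not unifiable. Ordering: $\prec$ is an atom ordering (irreflexive,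 well-founded, total on ground atoms), lifted to literals by representing $A$ as $\{A\}$ and $\neg A$ as $\{A,A\}$ and comparing by multiset extension, and to ground clauses by the multiset extension of the literal ordering. Standing assumption: for ground atoms $Q(s)$ and $P(t)$ where $s$ is a proper subterm of $t$, the literal $\neg Q(s)$ is not greater than the literal $P(t)$. A literal $A$ is maximal [strictly maximal] in $(C\vee A;\pi)$ if there is a solution $\delta$ of $\pi$ such that $B\delta\preceq A\delta$ [$B\delta\prec A\delta$] for all literals $B$ of $C$. Selection function: for an MSL(SDC) clause $(S_1(t_1),\dots,S_n(t_n)\rightarrow P_1(s_1),\dots,P_m(s_m);\pi)$, $\mathrm{sel}(C)$ consists of those $S_i(t_i)$ such that (1) $t_i$ is not a variable, or (2) $t_1,\dots,t_n$ are all variables and $t_i\notin\mathrm{vars}(s_1,\dots,s_m)$, or (3) $\{t_1,\dots,t_n\}\subseteq\mathrm{vars}(s_1,\dots,s_m)$ and $s_j=t_i$ for some $j$. SDC-Resolution: from variable-disjoint $(\Gamma_1\rightarrow\Delta_1,A;\pi_1)$ and $(\Gamma_2,B\rightarrow\Delta_2;\pi_2)$ infer $((\Gamma_1,\Gamma_2\rightarrow\Delta_1,\Delta_2)\sigma;\mathrm{norm}((\pi_1\wedge\pi_2)\sigma))$ provided: $\sigma=\mathrm{mgu}(A,B)$; $\mathrm{norm}((\pi_1\wedge\pi_2)\sigma)$ is solvable; $A\sigma$ is strictly maximal in $(\Gamma_1\rightarrow\Delta_1,A;\pi_1)\sigma$ and $\mathrm{sel}(\Gamma_1\rightarrow\Delta_1,A)=\emptyset$;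 and either $B\in\mathrm{sel}(\Gamma_2,B\rightarrow\Delta_2)$, or $\mathrm{sel}(\Gamma_2,B\rightarrow\Delta_2)=\emptyset$ and $\neg B\sigma$ is maximal in $(\Gamma_2,B\rightarrow\Delta_2;\pi_2)\sigma$. SDC-Factoring: from $(\Gamma\rightarrow\Delta,A,B;\pi)$ infer $((\Gamma\rightarrow\Delta,A)\sigma;\mathrm{norm}(\pi\sigma))$ provided $\sigma=\mathrm{mgu}(A,B)$, $\mathrm{sel}(\Gamma\rightarrow\Delta,A,B)=\emptyset$, $A\sigma$ is maximal in $(\Gamma\rightarrow\Delta,A,B;\pi)\sigma$, and $\mathrm{norm}(\pi\sigma)$ is solvable. *)

theory Defs
  imports Main "HOL-Library.Multiset"
begin

datatype (discs_sels) ('f, 'v) trm = Var 'v | Fun 'f "('f, 'v) trm list"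

type_synonym ('f, 'v) subst = "'v \<Rightarrow> ('f, 'v) trm"

fun subst :: "('f, 'v) trm \<Rightarrow> ('f, 'v) subst \<Rightarrow> ('f, 'v) trm" where
  "subst (Var x) \<sigma> = \<sigma> x"
| "subst (Fun f ts) \<sigma> = Fun f (map (\<lambda>t. subst t \<sigma>) ts)"

fun vars_trm :: "('f, 'v) trm \<Rightarrow> 'v set" where
  "vars_trm (Var x) = {x}"
| "vars_trm (Fun f ts) = \<Union> (set (map vars_trm ts))"

definition ground :: "('f, 'v) trm \<Rightarrow> bool" where
  "ground t \<longleftrightarrow> vars_trm t = {}"

fun wf_trm :: "('f \<Rightarrow> nat) \<Rightarrow> ('f, 'v) trm \<Rightarrow> bool" where
  "wf_trm ar (Var x) = True"
| "wf_trm ar (Fun f ts) = (length ts = ar f \<and> list_all (wf_trm ar) ts)"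

definition instance_of :: "('f, 'v) trm \<Rightarrow> ('f, 'v) trm \<Rightarrow> bool" where
  "instance_of t s \<longleftrightarrow> (\<exists>\<tau>. t = subst s \<tau>)"

inductive psubt :: "('f, 'v) trm \<Rightarrow> ('f, 'v) trm \<Rightarrow> bool" where
  "s \<in> set ts \<Longrightarrow> psubt s (Fun f ts)"
| "psubt s t \<Longrightarrow> t \<in> set ts \<Longrightarrow> psubt s (Fun f ts)"

inductive straight :: "('f, 'v) trm \<Rightarrow> bool" where
  "straight (Var x)"
| "(\<forall>s\<in>set ss. is_Var s) \<Longrightarrow> distinct ss \<Longrightarrow> straight (Fun f ss)"
| "straight s \<Longrightarrow> (\<forall>u\<in>set (xs @ ys). is_Var u) \<Longrightarrow> distinct (xs @ ys)
     \<Longrightarrow> straight (Fun f (xs @ s # ys))"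

type_synonym ('p, 'f, 'v) atom = "'p \<times> ('f, 'v) trm"

definition subst_atom :: "('p, 'f, 'v) atom \<Rightarrow> ('f, 'v) subst \<Rightarrow> ('p, 'f, 'v) atom" where
  "subst_atom A \<sigma> = (fst A, subst (snd A) \<sigma>)"

definition unifier :: "('f, 'v) subst \<Rightarrow> ('p, 'f, 'v) atom \<Rightarrow> ('p, 'f, 'v) atom \<Rightarrow> bool" where
  "unifier \<sigma> A B \<longleftrightarrow> subst_atom A \<sigma> = subst_atom B \<sigma>"

definition is_mgu :: "('f, 'v) subst \<Rightarrow> ('p, 'f, 'v) atom \<Rightarrow> ('p, 'f, 'v) atom \<Rightarrow> bool" where
  "is_mgu \<sigma> A B \<longleftrightarrow> unifier \<sigma> A B \<and>
     (\<forall>\<tau>. unifier \<tau> A B \<longrightarrow> (\<exists>\<rho>. \<forall>x. \<tau> x = subst (\<sigma> x) \<rho>))"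

datatype 'a lit = Pos 'a | Neg 'a

fun subst_lit :: "('p, 'f, 'v) atom lit \<Rightarrow> ('f, 'v) subst \<Rightarrow> ('p, 'f, 'v) atom lit" where
  "subst_lit (Pos A) \<sigma> = Pos (subst_atom A \<sigma>)"
| "subst_lit (Neg A) \<sigma> = Neg (subst_atom A \<sigma>)"

text \<open>A clause \<Gamma> \<rightarrow> \<Delta> is the pair (\<Gamma>, \<Delta>) of multisets of atoms.\<close>
type_synonym ('p, 'f, 'v) clause = "('p, 'f, 'v) atom multiset \<times> ('p, 'f, 'v) atom multiset"

definition subst_cls :: "('p, 'f, 'v) clause \<Rightarrow> ('f, 'v) subst \<Rightarrow> ('p, 'f, 'v) clause" where
  "subst_cls C \<sigma> = (image_mset (\<lambda>A. subst_atom A \<sigma>) (fst C), image_mset (\<lambda>A. subst_atom A \<sigma>) (snd C))"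

definition clause_lits :: "('p, 'f, 'v) clause \<Rightarrow> ('p, 'f, 'v) atom lit multiset" where
  "clause_lits C = image_mset Neg (fst C) + image_mset Pos (snd C)"

definition clause_vars :: "('p, 'f, 'v) clause \<Rightarrow> 'v set" where
  "clause_vars C = (\<Union>A\<in>set_mset (fst C + snd C). vars_trm (snd A))"

text \<open>Bot is the false constraint; Conj M is the conjunction of the atomic
  constraints t \<noteq> s for (t, s) in M (Conj {#} is the true constraint).\<close>
datatype ('f, 'v) sdc = Bot | Conj "(('f, 'v) trm \<times> ('f, 'v) trm) multiset"

fun subst_sdc :: "('f, 'v) sdc \<Rightarrow> ('f, 'v) subst \<Rightarrow> ('f, 'v) sdc" where
  "subst_sdc Bot \<sigma> = Bot"
| "subst_sdc (Conj M) \<sigma> = Conj (image_mset (\<lambda>p. (subst (fst p) \<sigma>, snd p)) M)"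

fun sdc_and :: "('f, 'v) sdc \<Rightarrow> ('f, 'v) sdc \<Rightarrow> ('f, 'v) sdc" where
  "sdc_and (Conj M) (Conj N) = Conj (M + N)"
| "sdc_and _ _ = Bot"

fun sdc_lhs_vars :: "('f, 'v) sdc \<Rightarrow> 'v set" where
  "sdc_lhs_vars Bot = {}"
| "sdc_lhs_vars (Conj M) = (\<Union>p\<in>set_mset M. vars_trm (fst p))"

fun wf_sdc :: "('f \<Rightarrow> nat) \<Rightarrow> ('f, 'v) sdc \<Rightarrow> bool" where
  "wf_sdc ar Bot = True"
| "wf_sdc ar (Conj M) = (\<forall>p\<in>set_mset M. straight (snd p) \<and>
      vars_trm (fst p) \<inter> vars_trm (snd p) = {} \<and> wf_trm ar (fst p) \<and> wf_trm ar (snd p))"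

definition ground_subst :: "('f \<Rightarrow> nat) \<Rightarrow> ('f, 'v) subst \<Rightarrow> bool" where
  "ground_subst ar \<delta> \<longleftrightarrow> (\<forall>x. ground (\<delta> x) \<and> wf_trm ar (\<delta> x))"

fun solution :: "('f \<Rightarrow> nat) \<Rightarrow> ('f, 'v) subst \<Rightarrow> ('f, 'v) sdc \<Rightarrow> bool" where
  "solution ar \<delta> Bot = False"
| "solution ar \<delta> (Conj M) = (ground_subst ar \<delta> \<and>
      (\<forall>p\<in>set_mset M. \<not> instance_of (subst (fst p) \<delta>) (snd p)))"

definition solvable :: "('f \<Rightarrow> nat) \<Rightarrow> ('f, 'v) sdc \<Rightarrow> bool" where
  "solvable ar \<pi> \<longleftrightarrow> (\<exists>\<delta>. solution ar \<delta> \<pi>)"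

inductive sdc_step :: "('f, 'v) sdc \<Rightarrow> ('f, 'v) sdc \<Rightarrow> bool" where
  r1: "sdc_step (Conj (add_mset (Fun f ts, Var y) M)) Bot"
| r2: "length ys = length ts \<Longrightarrow> sdc_step (Conj (add_mset (Fun f ts, Fun f (map Var ys)) M)) Bot"
| r3: "length ss = length ts \<Longrightarrow> i < length ss \<Longrightarrow> \<not> is_Var (ss ! i) \<Longrightarrow>
       sdc_step (Conj (add_mset (Fun f ts, Fun f ss) M)) (Conj (add_mset (ts ! i, ss ! i) M))"
| r4: "f \<noteq> g \<Longrightarrow> sdc_step (Conj (add_mset (Fun f ts, Fun g ss) M)) (Conj M)"
| r5: "sdc_step (Conj (add_mset (Var x, s) (add_mset (Var x, subst s \<sigma>) M)))
              (Conj (add_mset (Var x, s) M))"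

definition is_norm :: "('f, 'v) sdc \<Rightarrow> ('f, 'v) sdc \<Rightarrow> bool" where
  "is_norm \<pi> \<pi>' \<longleftrightarrow> sdc_step\<^sup>*\<^sup>* \<pi> \<pi>' \<and> \<not> (\<exists>\<pi>''. sdc_step \<pi>' \<pi>'')"

definition wf_cclause :: "('f \<Rightarrow> nat) \<Rightarrow> ('p, 'f, 'v) clause \<Rightarrow> ('f, 'v) sdc \<Rightarrow> bool" where
  "wf_cclause ar C \<pi> \<longleftrightarrow> (\<forall>A\<in>set_mset (fst C + snd C). wf_trm ar (snd A)) \<and> wf_sdc ar \<pi>"

definition sat_ground :: "('p, 'f, 'v) atom set \<Rightarrow> ('p, 'f, 'v) clause \<Rightarrow> bool" where
  "sat_ground I C \<longleftrightarrow> set_mset (snd C) \<inter> I \<noteq> {} \<or> \<not> set_mset (fst C) \<subseteq> I"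

definition sat :: "('f \<Rightarrow> nat) \<Rightarrow> ('p, 'f, 'v) atom set \<Rightarrow> ('p, 'f, 'v) clause \<Rightarrow> ('f, 'v) sdc \<Rightarrow> bool" where
  "sat ar I C \<pi> \<longleftrightarrow> (\<forall>\<delta>. solution ar \<delta> \<pi> \<longrightarrow> sat_ground I (subst_cls C \<delta>))"

type_synonym ('p, 'f, 'v) atom_ord = "('p, 'f, 'v) atom \<Rightarrow> ('p, 'f, 'v) atom \<Rightarrow> bool"

fun lit_ms :: "'a lit \<Rightarrow> 'a multiset" where
  "lit_ms (Pos A) = {#A#}"
| "lit_ms (Neg A) = {#A, A#}"

definition lit_less :: "('p, 'f, 'v) atom_ord \<Rightarrow> ('p, 'f, 'v) atom lit \<Rightarrow> ('p, 'f, 'v) atom lit \<Rightarrow> bool" where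
  "lit_less lt L K \<longleftrightarrow> (lit_ms L, lit_ms K) \<in> mult {(a, b). lt a b}"

definition lit_le :: "('p, 'f, 'v) atom_ord \<Rightarrow> ('p, 'f, 'v) atom lit \<Rightarrow> ('p, 'f, 'v) atom lit \<Rightarrow> bool" where
  "lit_le lt L K \<longleftrightarrow> lit_less lt L K \<or> L = K"

definition ground_atom :: "('f \<Rightarrow> nat) \<Rightarrow> ('p, 'f, 'v) atom \<Rightarrow> bool" where
  "ground_atom ar A \<longleftrightarrow> ground (snd A) \<and> wf_trm ar (snd A)"

definition atom_ordering :: "('f \<Rightarrow> nat) \<Rightarrow> ('p, 'f, 'v) atom_ord \<Rightarrow> bool" where
  "atom_ordering ar lt \<longleftrightarrow>
     (\<forall>A. \<not> lt A A) \<and> transp lt \<and> wfP lt \<and>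
     (\<forall>A B. ground_atom ar A \<longrightarrow> ground_atom ar B \<longrightarrow> A \<noteq> B \<longrightarrow> lt A B \<or> lt B A) \<and>
     (\<forall>Q s P t. ground_atom ar (Q, s) \<longrightarrow> ground_atom ar (P, t) \<longrightarrow> psubt s t \<longrightarrow>
        \<not> lit_less lt (Pos (P, t)) (Neg (Q, s)))"

text \<open>L is maximal [strictly maximal] in (C \<or> L; \<pi>), where rest = the literals of C.\<close>
definition maximal_in :: "('f \<Rightarrow> nat) \<Rightarrow> ('p, 'f, 'v) atom_ord \<Rightarrow> ('p, 'f, 'v) atom lit \<Rightarrow>
    ('p, 'f, 'v) atom lit multiset \<Rightarrow> ('f, 'v) sdc \<Rightarrow> bool" where
  "maximal_in ar lt L rest \<pi> \<longleftrightarrow>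
     (\<exists>\<delta>. solution ar \<delta> \<pi> \<and> (\<forall>B\<in>set_mset rest. lit_le lt (subst_lit B \<delta>) (subst_lit L \<delta>)))"

definition strictly_maximal_in :: "('f \<Rightarrow> nat) \<Rightarrow> ('p, 'f, 'v) atom_ord \<Rightarrow> ('p, 'f, 'v) atom lit \<Rightarrow>
    ('p, 'f, 'v) atom lit multiset \<Rightarrow> ('f, 'v) sdc \<Rightarrow> bool" where
  "strictly_maximal_in ar lt L rest \<pi> \<longleftrightarrow>
     (\<exists>\<delta>. solution ar \<delta> \<pi> \<and> (\<forall>B\<in>set_mset rest. lit_less lt (subst_lit B \<delta>) (subst_lit L \<delta>)))"

definition sel :: "('p, 'f, 'v) clause \<Rightarrow> ('p, 'f, 'v) atom multiset" where
  "sel C = (let \<Gamma> = fst C; \<Delta> = snd C;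
               V = (\<Union>A\<in>set_mset \<Delta>. vars_trm (snd A)) in
     filter_mset (\<lambda>S. \<not> is_Var (snd S)
         \<or> ((\<forall>T\<in>set_mset \<Gamma>. is_Var (snd T)) \<and> snd S \<notin> Var ` V)
         \<or> ((\<forall>T\<in>set_mset \<Gamma>. snd T \<in> Var ` V) \<and> (\<exists>P\<in>set_mset \<Delta>. snd P = snd S))) \<Gamma>)"

definition sdc_resolution :: "('f \<Rightarrow> nat) \<Rightarrow> ('p, 'f, 'v) atom_ord \<Rightarrow>
    ('p, 'f, 'v) clause \<Rightarrow> ('f, 'v) sdc \<Rightarrow> ('p, 'f, 'v) clause \<Rightarrow> ('f, 'v) sdc \<Rightarrow>
    ('p, 'f, 'v) clause \<Rightarrow> ('f, 'v) sdc \<Rightarrow> bool" where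
  "sdc_resolution ar lt C1 \<pi>1 C2 \<pi>2 R \<pi>R \<longleftrightarrow>
    (\<exists>\<Gamma>1 \<Delta>1 A \<Gamma>2 B \<Delta>2 \<sigma>.
       C1 = (\<Gamma>1, \<Delta>1 + {#A#}) \<and> C2 = (\<Gamma>2 + {#B#}, \<Delta>2) \<and>
       (clause_vars C1 \<union> sdc_lhs_vars \<pi>1) \<inter> (clause_vars C2 \<union> sdc_lhs_vars \<pi>2) = {} \<and>
       is_mgu \<sigma> A B \<and>
       is_norm (subst_sdc (sdc_and \<pi>1 \<pi>2) \<sigma>) \<pi>R \<and> solvable ar \<pi>R \<and>
       strictly_maximal_in ar lt (Pos (subst_atom A \<sigma>))
          (clause_lits (subst_cls (\<Gamma>1, \<Delta>1) \<sigma>)) (subst_sdc \<pi>1 \<sigma>) \<and>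
       sel C1 = {#} \<and>
       (B \<in># sel C2 \<or>
        (sel C2 = {#} \<and> maximal_in ar lt (Neg (subst_atom B \<sigma>))
           (clause_lits (subst_cls (\<Gamma>2, \<Delta>2) \<sigma>)) (subst_sdc \<pi>2 \<sigma>))) \<and>
       R = subst_cls (\<Gamma>1 + \<Gamma>2, \<Delta>1 + \<Delta>2) \<sigma>)"

definition sdc_factoring :: "('f \<Rightarrow> nat) \<Rightarrow> ('p, 'f, 'v) atom_ord \<Rightarrow>
    ('p, 'f, 'v) clause \<Rightarrow> ('f, 'v) sdc \<Rightarrow> ('p, 'f, 'v) clause \<Rightarrow> ('f, 'v) sdc \<Rightarrow> bool" where
  "sdc_factoring ar lt C \<pi> R \<pi>R \<longleftrightarrow>
    (\<exists>\<Gamma> \<Delta> A B \<sigma>.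
       C = (\<Gamma>, \<Delta> + {#A, B#}) \<and>
       is_mgu \<sigma> A B \<and>
       sel C = {#} \<and>
       maximal_in ar lt (Pos (subst_atom A \<sigma>))
          (clause_lits (subst_cls (\<Gamma>, \<Delta> + {#B#}) \<sigma>)) (subst_sdc \<pi> \<sigma>) \<and>
       is_norm (subst_sdc \<pi> \<sigma>) \<pi>R \<and> solvable ar \<pi>R \<and>
       R = subst_cls (\<Gamma>, \<Delta> + {#A#}) \<sigma>)"

end

theory Submission
  imports Defs
begin

text \<open>Soundness does not depend on the ordering and selection side conditions: satisfaction
  of a constrained clause is preserved by instantiation with a substitution into well-formed
  terms, by strengthening its constraint, and by normalizing the constraint (every solution of
  a normal form solves the original constraint). After instantiating both premises with the
  mgu and conjoining their constraints, the inferences are just ground resolution and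
  factoring, which are sound. The only subtle point is that the mgu of well-formed atoms maps
  into well-formed terms, since otherwise its instances would not be Herbrand instances.\<close>

definition comp_subst :: "('f, 'v) subst \<Rightarrow> ('f, 'v) subst \<Rightarrow> ('f, 'v) subst" where
  "comp_subst \<sigma> \<delta> = (\<lambda>x. subst (\<sigma> x) \<delta>)"

lemma subst_subst: "subst (subst t \<sigma>) \<delta> = subst t (comp_subst \<sigma> \<delta>)"
  by (induction t) (auto simp: comp_subst_def)

lemma subst_atom_subst_atom: "subst_atom (subst_atom A \<sigma>) \<delta> = subst_atom A (comp_subst \<sigma> \<delta>)"
  by (simp add: subst_atom_def subst_subst)

lemma subst_cls_subst_cls: "subst_cls (subst_cls C \<sigma>) \<delta> = subst_cls C (comp_subst \<sigma> \<delta>)"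
  by (simp add: subst_cls_def multiset.map_comp comp_def subst_atom_subst_atom)

lemma vars_trm_subst: "vars_trm (subst t \<delta>) = (\<Union>x\<in>vars_trm t. vars_trm (\<delta> x))"
  by (induction t) auto

lemma wf_trm_subst: "wf_trm ar t \<Longrightarrow> (\<And>x. wf_trm ar (\<delta> x)) \<Longrightarrow> wf_trm ar (subst t \<delta>)"
  by (induction t) (auto simp: list_all_iff)

lemma wf_trm_subst_imp_wf_trm: "wf_trm ar (subst t \<rho>) \<Longrightarrow> wf_trm ar t"
  by (induction t) (auto simp: list_all_iff)

lemma ground_subst_comp_subst:
  assumes "ground_subst ar \<delta>" and "\<And>x. wf_trm ar (\<sigma> x)"
  shows "ground_subst ar (comp_subst \<sigma> \<delta>)"
  using assms unfolding ground_subst_def ground_def comp_subst_def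
  by (auto simp: vars_trm_subst intro: wf_trm_subst)

lemma is_mgu_unifies: "is_mgu \<sigma> A B \<Longrightarrow> subst_atom A \<sigma> = subst_atom B \<sigma>"
  unfolding is_mgu_def unifier_def by blast

fun wf_part :: "('f \<Rightarrow> nat) \<Rightarrow> ('f, 'v) trm \<Rightarrow> ('f, 'v) trm" where
  "wf_part ar (Var x) = Var x"
| "wf_part ar (Fun f ts) =
     (if length ts = ar f then Fun f (map (wf_part ar) ts) else Var undefined)"

lemma wf_trm_wf_part: "wf_trm ar (wf_part ar t)"
  by (induction t) (auto simp: list_all_iff)

lemma wf_part_subst: "wf_trm ar t \<Longrightarrow> wf_part ar (subst t \<sigma>) = subst t (\<lambda>x. wf_part ar (\<sigma> x))"
  by (induction t) (auto simp: list_all_iff)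

text \<open>Applying wf_part to the mgu yields another unifier; being an instance of the mgu, it
  can only be well-formed if the mgu is.\<close>
lemma is_mgu_wf_trm:
  assumes mgu: "is_mgu \<sigma> A B" and "wf_trm ar (snd A)" and "wf_trm ar (snd B)"
  shows "wf_trm ar (\<sigma> x)"
proof -
  let ?\<tau> = "\<lambda>x. wf_part ar (\<sigma> x)"
  have "unifier ?\<tau> A B"
    using assms wf_part_subst[of ar "snd A" \<sigma>] wf_part_subst[of ar "snd B" \<sigma>]
    unfolding is_mgu_def unifier_def subst_atom_def by (metis prod.inject)
  then obtain \<rho> where "\<And>x. ?\<tau> x = subst (\<sigma> x) \<rho>"
    using mgu unfolding is_mgu_def by blast
  then have "wf_trm ar (subst (\<sigma> x) \<rho>)"
    by (metis wf_trm_wf_part)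
  then show ?thesis
    by (rule wf_trm_subst_imp_wf_trm)
qed

lemma sdc_step_solution: "sdc_step \<pi> \<pi>' \<Longrightarrow> solution ar \<delta> \<pi>' \<Longrightarrow> solution ar \<delta> \<pi>"
proof (induction rule: sdc_step.induct)
  case (r3 ss ts i f M)
  have "\<not> instance_of (subst (Fun f ts) \<delta>) (Fun f ss)"
  proof
    assume "instance_of (subst (Fun f ts) \<delta>) (Fun f ss)"
    then obtain \<tau> where "map (\<lambda>t. subst t \<delta>) ts = map (\<lambda>t. subst t \<tau>) ss"
      unfolding instance_of_def by auto
    then have "subst (ts ! i) \<delta> = subst (ss ! i) \<tau>"
      using r3(1,2) by (metis length_map nth_map)
    then show False
      using r3.prems by (auto simp: instance_of_def)
  qed
  then show ?case
    using r3.prems by auto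
next
  case (r4 f g ts ss M)
  then show ?case
    by (auto simp: instance_of_def)
next
  case (r5 x s \<sigma> M)
  have "\<not> instance_of (subst (Var x) \<delta>) (subst s \<sigma>)"
    using r5 by (auto simp: instance_of_def subst_subst)
  then show ?case
    using r5 by auto
qed auto

lemma is_norm_solution: "is_norm \<pi> \<pi>' \<Longrightarrow> solution ar \<delta> \<pi>' \<Longrightarrow> solution ar \<delta> \<pi>"
  unfolding is_norm_def
  by (auto elim: converse_rtranclp_induct[where P = "\<lambda>\<pi>. solution ar \<delta> \<pi>"]
           intro: sdc_step_solution)

lemma solution_sdc_and:
  "solution ar \<delta> (sdc_and \<pi>1 \<pi>2) \<longleftrightarrow> solution ar \<delta> \<pi>1 \<and> solution ar \<delta> \<pi>2"
  by (cases \<pi>1; cases \<pi>2) auto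

lemma solution_subst_sdc:
  assumes "solution ar \<delta> (subst_sdc \<pi> \<sigma>)" and "\<And>x. wf_trm ar (\<sigma> x)"
  shows "solution ar (comp_subst \<sigma> \<delta>) \<pi>"
proof (cases \<pi>)
  case (Conj M)
  then have "ground_subst ar \<delta>"
    using assms(1) by auto
  then show ?thesis
    using assms Conj ground_subst_comp_subst[OF _ assms(2)] by (auto simp: subst_subst)
qed (use assms in auto)

lemma sat_subst:
  assumes "sat ar I C \<pi>" and "\<And>x. wf_trm ar (\<sigma> x)"
  shows "sat ar I (subst_cls C \<sigma>) (subst_sdc \<pi> \<sigma>)"
  using assms solution_subst_sdc unfolding sat_def subst_cls_subst_cls by blast

lemma sat_is_norm: "is_norm \<pi> \<pi>' \<Longrightarrow> sat ar I C \<pi> \<Longrightarrow> sat ar I C \<pi>'"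
  unfolding sat_def using is_norm_solution by blast

lemma sat_sdc_and_left: "sat ar I C \<pi>1 \<Longrightarrow> sat ar I C (sdc_and \<pi>1 \<pi>2)"
  unfolding sat_def solution_sdc_and by blast

lemma sat_sdc_and_right: "sat ar I C \<pi>2 \<Longrightarrow> sat ar I C (sdc_and \<pi>1 \<pi>2)"
  unfolding sat_def solution_sdc_and by blast

lemma sat_ground_resolve:
  assumes "sat_ground I (\<Gamma>1, \<Delta>1 + {#A#})" and "sat_ground I (\<Gamma>2 + {#A#}, \<Delta>2)"
  shows "sat_ground I (\<Gamma>1 + \<Gamma>2, \<Delta>1 + \<Delta>2)"
  using assms unfolding sat_ground_def by auto

lemma sat_resolve:
  assumes "sat ar I (\<Gamma>1, \<Delta>1 + {#A#}) \<pi>" and "sat ar I (\<Gamma>2 + {#A#}, \<Delta>2) \<pi>"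
  shows "sat ar I (\<Gamma>1 + \<Gamma>2, \<Delta>1 + \<Delta>2) \<pi>"
  unfolding sat_def
proof (intro allI impI)
  fix \<delta> assume "solution ar \<delta> \<pi>"
  then have "sat_ground I (subst_cls (\<Gamma>1, \<Delta>1 + {#A#}) \<delta>)"
    and "sat_ground I (subst_cls (\<Gamma>2 + {#A#}, \<Delta>2) \<delta>)"
    using assms unfolding sat_def by blast+
  then show "sat_ground I (subst_cls (\<Gamma>1 + \<Gamma>2, \<Delta>1 + \<Delta>2) \<delta>)"
    unfolding subst_cls_def by (auto intro: sat_ground_resolve)
qed

lemma sat_factor: "sat ar I (\<Gamma>, \<Delta> + {#A, A#}) \<pi> \<Longrightarrow> sat ar I (\<Gamma>, \<Delta> + {#A#}) \<pi>"
  unfolding sat_def sat_ground_def subst_cls_def by auto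

lemma sdc_resolution_sound:
  assumes "wf_cclause ar C1 \<pi>1" and "wf_cclause ar C2 \<pi>2"
    and "sdc_resolution ar lt C1 \<pi>1 C2 \<pi>2 R \<pi>R"
    and "sat ar I C1 \<pi>1" and "sat ar I C2 \<pi>2"
  shows "sat ar I R \<pi>R"
proof -
  obtain \<Gamma>1 \<Delta>1 A \<Gamma>2 B \<Delta>2 \<sigma> where
    C1: "C1 = (\<Gamma>1, \<Delta>1 + {#A#})" and C2: "C2 = (\<Gamma>2 + {#B#}, \<Delta>2)" and
    mgu: "is_mgu \<sigma> A B" and norm: "is_norm (subst_sdc (sdc_and \<pi>1 \<pi>2) \<sigma>) \<pi>R" and
    R: "R = subst_cls (\<Gamma>1 + \<Gamma>2, \<Delta>1 + \<Delta>2) \<sigma>"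
    using assms(3) unfolding sdc_resolution_def by blast
  have wf_\<sigma>: "\<And>x. wf_trm ar (\<sigma> x)"
    using assms(1,2) C1 C2 is_mgu_wf_trm[OF mgu] unfolding wf_cclause_def by auto
  have AB: "subst_atom A \<sigma> = subst_atom B \<sigma>"
    using mgu by (rule is_mgu_unifies)
  let ?\<pi> = "subst_sdc (sdc_and \<pi>1 \<pi>2) \<sigma>"
  have "sat ar I (subst_cls C1 \<sigma>) ?\<pi>" and "sat ar I (subst_cls C2 \<sigma>) ?\<pi>"
    using sat_subst[OF sat_sdc_and_left[OF assms(4)] wf_\<sigma>]
      sat_subst[OF sat_sdc_and_right[OF assms(5)] wf_\<sigma>] by auto
  then have "sat ar I R ?\<pi>"
    unfolding R C1 C2 subst_cls_def using AB by (auto intro: sat_resolve)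
  then show ?thesis
    using norm by (rule sat_is_norm[rotated])
qed

lemma sdc_factoring_sound:
  assumes "wf_cclause ar C \<pi>" and "sdc_factoring ar lt C \<pi> R \<pi>R" and "sat ar I C \<pi>"
  shows "sat ar I R \<pi>R"
proof -
  obtain \<Gamma> \<Delta> A B \<sigma> where
    C: "C = (\<Gamma>, \<Delta> + {#A, B#})" and mgu: "is_mgu \<sigma> A B" and
    norm: "is_norm (subst_sdc \<pi> \<sigma>) \<pi>R" and R: "R = subst_cls (\<Gamma>, \<Delta> + {#A#}) \<sigma>"
    using assms(2) unfolding sdc_factoring_def by blast
  have wf_\<sigma>: "\<And>x. wf_trm ar (\<sigma> x)"
    using assms(1) C is_mgu_wf_trm[OF mgu] unfolding wf_cclause_def by auto
  have AB: "subst_atom A \<sigma> = subst_atom B \<sigma>"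
    using mgu by (rule is_mgu_unifies)
  obtain \<Gamma>' \<Delta>' where \<Gamma>'\<Delta>': "subst_cls (\<Gamma>, \<Delta>) \<sigma> = (\<Gamma>', \<Delta>')"
    by fastforce
  have "sat ar I (subst_cls C \<sigma>) (subst_sdc \<pi> \<sigma>)"
    using assms(3) wf_\<sigma> by (rule sat_subst)
  then have "sat ar I (\<Gamma>', \<Delta>' + {#subst_atom A \<sigma>, subst_atom A \<sigma>#}) (subst_sdc \<pi> \<sigma>)"
    using \<Gamma>'\<Delta>' AB by (simp add: C subst_cls_def)
  then have "sat ar I (\<Gamma>', \<Delta>' + {#subst_atom A \<sigma>#}) (subst_sdc \<pi> \<sigma>)"
    by (rule sat_factor)
  moreover have "R = (\<Gamma>', \<Delta>' + {#subst_atom A \<sigma>#})"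
    using \<Gamma>'\<Delta>' by (simp add: R subst_cls_def)
  ultimately have "sat ar I R (subst_sdc \<pi> \<sigma>)"
    by simp
  then show ?thesis
    using norm by (rule sat_is_norm[rotated])
qed

theorem lemma1:
  fixes ar :: "'f \<Rightarrow> nat"
    and lt :: "('p, 'f, 'v) atom_ord"
  assumes "atom_ordering ar lt"
  shows "(\<forall>C1 \<pi>1 C2 \<pi>2 R \<pi>R (I :: ('p, 'f, 'v) atom set).
            wf_cclause ar C1 \<pi>1 \<longrightarrow> wf_cclause ar C2 \<pi>2 \<longrightarrow>
            sdc_resolution ar lt C1 \<pi>1 C2 \<pi>2 R \<pi>R \<longrightarrow>
            sat ar I C1 \<pi>1 \<longrightarrow> sat ar I C2 \<pi>2 \<longrightarrow> sat ar I R \<pi>R)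
       \<and> (\<forall>C \<pi> R \<pi>R (I :: ('p, 'f, 'v) atom set).
            wf_cclause ar C \<pi> \<longrightarrow>
            sdc_factoring ar lt C \<pi> R \<pi>R \<longrightarrow>
            sat ar I C \<pi> \<longrightarrow> sat ar I R \<pi>R)"
  using sdc_resolution_sound sdc_factoring_sound by blast

end
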